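(* In the setting below, suppose $n\ge 3$ and let $p,q\in X$ with $S_p\cup S_q=E$ and $S_p\cap S_q=\{e_k\}$. If $|S_p|\ge 3$ and $|S_q|\ge 3$, then any strange index of $p$ or of $q$ equals $e_k$. If $|S_p|=2$, then any strange index of $q$ equals $e_k$.
   Context: Setting: $E=\{e_0,\dots,e_n\}\subset\mathbb R^n$ is the vertex set of an $n$-simplex with $e_0+\cdots+e_n=0$, and $X\subset\mathbb R^n\setminus\{0\}$ is a finite set with $E\subseteq X$, no element of $X$ a positive multiple of another, such that every $n+1$ points of $X$ are in good position. (A finite set $A$ is in conical position if $0\notin\operatorname{conv}A$ and no point of $A$ lies in the positive hull—set of nonnegative linear combinations—of the other points; it is in good position otherwise.) For $p\in X$, the support $S_p$ is the minimal subset of $E$ whose positive hull contains $p$; then $p=\sum_{e_i\in S_p}\lambda_ie_i$ uniquely with all $\lambda_i>0$. Convention: each $p\in X$ is replaced by the positive multiple for which $\min_{e_i\in S_p}\lambda_i=1$. An element $e_j\in S_p$ is a strange index of $p$ if $\lambda_j>1$ (under these hypotheses there is at most one). *)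

theory Defs
  imports "HOL-Analysis.Analysis"
begin

definition pos_hull :: "'a::real_vector set \<Rightarrow> 'a set" where
  "pos_hull A = {(\<Sum>a\<in>A. c a *\<^sub>R a) | c. \<forall>a\<in>A. 0 \<le> c a}"

definition conical_position :: "'a::real_vector set \<Rightarrow> bool" where
  "conical_position A \<longleftrightarrow> 0 \<notin> convex hull A \<and> (\<forall>a\<in>A. a \<notin> pos_hull (A - {a}))"

definition good_position :: "'a::real_vector set \<Rightarrow> bool" where
  "good_position A \<longleftrightarrow> \<not> conical_position A"

definition support :: "'a::real_vector set \<Rightarrow> 'a \<Rightarrow> 'a set" where
  "support E p = (THE S. S \<subseteq> E \<and> p \<in> pos_hull S \<and> (\<forall>T. T \<subset> S \<longrightarrow> p \<notin> pos_hull T))"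

text \<open>e is a strange index of p: writing p = sum of lambda_i e_i over the support with all
  lambda_i > 0, after rescaling so that the minimal coefficient is 1, lambda_e > 1.
  Equivalently (scale invariance) lambda_e exceeds the minimum coefficient.\<close>
definition strange_index :: "'a::real_vector set \<Rightarrow> 'a \<Rightarrow> 'a \<Rightarrow> bool" where
  "strange_index E p e \<longleftrightarrow> e \<in> support E p \<and>
     (\<exists>l. p = (\<Sum>x\<in>support E p. l x *\<^sub>R x) \<and> (\<forall>x\<in>support E p. 0 < l x) \<and>
          (\<exists>c>0. Min ((\<lambda>x. c * l x) ` support E p) = 1 \<and> c * l e > 1))"

end

theory Submission
  imports Defs
begin

text \<open>Since the vertices of E sum to zero, the coefficients of a point with respect to E are unique
  up to an additive constant; normalising their minimum to 0, the support of p is where they are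
  positive, and a strange index of p is a support vertex whose coefficient is not minimal on the
  support. Suppose a strange index e of p differs from the common vertex k; take x in S_p with
  smaller coefficient than e, a in S_p distinct from k and e, and b in S_q distinct from k.
  Comparing the coefficients of e, a and k, one of the (n+1)-point subsets of X
  (E - {x}) + p, (E - {k}) + p or (E - {a, b}) + p + q is in conical position: every linear
  relation among its points, with at most one negative coefficient, is trivial.\<close>

lemma conical_positionI:
  fixes A :: "'a::real_vector set"
  assumes "finite A"
    and trivial: "\<And>d t. t \<in> A \<Longrightarrow> (\<Sum>y\<in>A. d y *\<^sub>R y) = 0 \<Longrightarrow> (\<forall>y\<in>A - {t}. 0 \<le> d y)
                    \<Longrightarrow> \<forall>y\<in>A. d y = 0"
  shows "conical_position A"
  unfolding conical_position_def
proof (intro conjI ballI notI)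
  assume "0 \<in> convex hull A"
  then obtain u where u: "\<forall>x\<in>A. 0 \<le> u x" "sum u A = 1" "(\<Sum>x\<in>A. u x *\<^sub>R x) = 0"
    using convex_hull_finite[OF \<open>finite A\<close>] by auto
  then have "A \<noteq> {}" by auto
  then obtain t where "t \<in> A" by blast
  then have "\<forall>y\<in>A. u y = 0" using trivial[OF _ u(3)] u(1) by blast
  with u(2) show False by simp
next
  fix a assume a: "a \<in> A" and "a \<in> pos_hull (A - {a})"
  then obtain c where c: "\<forall>y\<in>A - {a}. 0 \<le> c y" "a = (\<Sum>y\<in>A - {a}. c y *\<^sub>R y)"
    unfolding pos_hull_def by blast
  define d where "d = c(a := -1)"
  have "(\<Sum>y\<in>A. d y *\<^sub>R y) = d a *\<^sub>R a + (\<Sum>y\<in>A - {a}. d y *\<^sub>R y)"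
    using \<open>finite A\<close> a by (simp add: sum.remove)
  also have "(\<Sum>y\<in>A - {a}. d y *\<^sub>R y) = (\<Sum>y\<in>A - {a}. c y *\<^sub>R y)"
    by (rule sum.cong) (auto simp: d_def)
  also have "\<dots> = a" using c(2) by simp
  finally have "(\<Sum>y\<in>A. d y *\<^sub>R y) = 0" by (simp add: d_def)
  moreover have "\<forall>y\<in>A - {a}. 0 \<le> d y" using c(1) by (simp add: d_def)
  ultimately have "d a = 0" using trivial a by blast
  then show False by (simp add: d_def)
qed

locale centred_simplex =
  fixes E :: "'a::euclidean_space set"
  assumes finite_E: "finite E" and independent_E: "\<not> affine_dependent E" and sum_E: "\<Sum>E = 0"

locale full_centred_simplex = centred_simplex E for E :: "'a::euclidean_space set" +
  assumes card_E: "card E = DIM('a) + 1"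

context centred_simplex
begin

lemma linear_relation_constant:
  assumes rel: "(\<Sum>z\<in>E. u z *\<^sub>R z) = 0" and "x \<in> E" "y \<in> E"
  shows "u x = u y"
proof -
  \<comment> \<open>shifting u by its mean keeps the relation (as \<Sum>E = 0) and makes it an affine dependence\<close>
  define t where "t = sum u E / card E"
  have "card E > 0" using \<open>x \<in> E\<close> finite_E card_gt_0_iff by blast
  then have "sum (\<lambda>z. u z - t) E = 0"
    by (simp add: sum_subtractf t_def)
  moreover have "(\<Sum>z\<in>E. (u z - t) *\<^sub>R z) = 0"
    using rel sum_E by (simp add: scaleR_diff_left sum_subtractf flip: scaleR_sum_right)
  ultimately have "\<forall>z\<in>E. u z - t = 0"
    using independent_E affine_dependent_explicit_finite[OF finite_E] by blast
  then show ?thesis using assms by auto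
qed

lemma coords_diff_constant:
  assumes "(\<Sum>z\<in>E. u z *\<^sub>R z) = (\<Sum>z\<in>E. v z *\<^sub>R z)" and "x \<in> E" "y \<in> E"
  shows "u x - v x = u y - v y"
proof (rule linear_relation_constant[OF _ assms(2,3)])
  show "(\<Sum>z\<in>E. (u z - v z) *\<^sub>R z) = 0"
    using assms(1) by (simp add: scaleR_diff_left sum_subtractf)
qed

lemma sum_restrict_scaleR:
  assumes "S \<subseteq> E"
  shows "(\<Sum>z\<in>E. (if z \<in> S then f z else 0) *\<^sub>R z) = (\<Sum>z\<in>S. f z *\<^sub>R z)"
proof -
  have "(\<Sum>z\<in>E. (if z \<in> S then f z else 0) *\<^sub>R z) = (\<Sum>z\<in>E. if z \<in> S then f z *\<^sub>R z else 0)"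
    by (rule sum.cong) auto
  also have "\<dots> = (\<Sum>z\<in>S. f z *\<^sub>R z)"
    using sum.inter_restrict[OF finite_E, of "\<lambda>z. f z *\<^sub>R z" S] assms by (simp add: Int_absorb1)
  finally show ?thesis .
qed

lemma relation_in_coords:
  assumes "finite P" "P \<inter> E = {}"
    and coords: "\<And>y. y \<in> P \<Longrightarrow> y = (\<Sum>z\<in>E. c y z *\<^sub>R z)"
    and rel: "(\<Sum>y\<in>P \<union> (E - D). d y *\<^sub>R y) = 0" and "x \<in> E" "x' \<in> E"
  shows "(\<Sum>y\<in>P. d y * c y x) + (if x \<in> D then 0 else d x)
       = (\<Sum>y\<in>P. d y * c y x') + (if x' \<in> D then 0 else d x')"
proof (rule linear_relation_constant[OF _ \<open>x \<in> E\<close> \<open>x' \<in> E\<close>])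
  have "(\<Sum>z\<in>E. ((\<Sum>y\<in>P. d y * c y z) + (if z \<in> D then 0 else d z)) *\<^sub>R z)
      = (\<Sum>y\<in>P. d y *\<^sub>R (\<Sum>z\<in>E. c y z *\<^sub>R z)) + (\<Sum>y\<in>E - D. d y *\<^sub>R y)"
  proof -
    have "(\<Sum>z\<in>E. (if z \<in> D then 0 else d z) *\<^sub>R z) = (\<Sum>y\<in>E - D. d y *\<^sub>R y)"
      unfolding sum_restrict_scaleR[OF Diff_subset, symmetric] by (rule sum.cong) auto
    then show ?thesis
      by (simp add: scaleR_add_left sum.distrib scaleR_sum_left scaleR_sum_right sum.swap[of _ E])
  qed
  also have "(\<Sum>y\<in>P. d y *\<^sub>R (\<Sum>z\<in>E. c y z *\<^sub>R z)) = (\<Sum>y\<in>P. d y *\<^sub>R y)"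
    by (rule sum.cong) (simp_all add: coords[symmetric])
  also have "(\<Sum>y\<in>P. d y *\<^sub>R y) + (\<Sum>y\<in>E - D. d y *\<^sub>R y) = (\<Sum>y\<in>P \<union> (E - D). d y *\<^sub>R y)"
    using assms(1,2) finite_E by (intro sum.union_disjoint[symmetric]) auto
  also have "\<dots> = 0" by (rule rel)
  finally show "(\<Sum>z\<in>E. ((\<Sum>y\<in>P. d y * c y z) + (if z \<in> D then 0 else d z)) *\<^sub>R z) = 0" .
qed

text \<open>The paper's coefficients lambda_i, extended by 0 to all of E and shifted by a constant so
  that their minimum over E is 0.\<close>

definition canonical_coords :: "('a \<Rightarrow> real) \<Rightarrow> 'a \<Rightarrow> bool" where
  "canonical_coords l p \<longleftrightarrow> (\<forall>x\<in>E. 0 \<le> l x) \<and> (\<exists>y\<in>E. l y = 0) \<and> p = (\<Sum>x\<in>E. l x *\<^sub>R x)"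

lemma pos_hull_iff_positive_coords_subset:
  assumes can: "canonical_coords l p" and "S \<subseteq> E"
  shows "p \<in> pos_hull S \<longleftrightarrow> {x\<in>E. 0 < l x} \<subseteq> S"
proof
  assume "p \<in> pos_hull S"
  then obtain c where c: "\<forall>a\<in>S. 0 \<le> c a" "p = (\<Sum>a\<in>S. c a *\<^sub>R a)"
    unfolding pos_hull_def by auto
  define c' where "c' z = (if z \<in> S then c z else 0)" for z
  have "(\<Sum>z\<in>E. l z *\<^sub>R z) = (\<Sum>z\<in>E. c' z *\<^sub>R z)"
    using can c(2) sum_restrict_scaleR[OF \<open>S \<subseteq> E\<close>, of c]
    unfolding canonical_coords_def c'_def by simp
  note const = coords_diff_constant[OF this]
  obtain y where y: "y \<in> E" "l y = 0" using can unfolding canonical_coords_def by blast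
  show "{x\<in>E. 0 < l x} \<subseteq> S"
  proof (rule subsetI, rule ccontr)
    fix z assume z: "z \<in> {x\<in>E. 0 < l x}" "z \<notin> S"
    have "l z - c' z = l y - c' y" using const z y by blast
    moreover have "c' y \<ge> 0" using c(1) by (simp add: c'_def)
    ultimately show False using z y by (simp add: c'_def)
  qed
next
  assume sub: "{x\<in>E. 0 < l x} \<subseteq> S"
  have nonneg: "\<forall>x\<in>E. 0 \<le> l x" using can unfolding canonical_coords_def by blast
  have "(\<Sum>z\<in>S. l z *\<^sub>R z) = (\<Sum>z\<in>E. (if z \<in> S then l z else 0) *\<^sub>R z)"
    using sum_restrict_scaleR[OF \<open>S \<subseteq> E\<close>] by simp
  also have "\<dots> = (\<Sum>z\<in>E. l z *\<^sub>R z)"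
    using sub nonneg by (intro sum.cong) force+
  also have "\<dots> = p" using can unfolding canonical_coords_def by simp
  finally show "p \<in> pos_hull S"
    using nonneg \<open>S \<subseteq> E\<close> unfolding pos_hull_def by blast
qed

lemma support_canonical_coords:
  assumes "canonical_coords l p"
  shows "support E p = {x\<in>E. 0 < l x}"
proof -
  let ?S = "{x\<in>E. 0 < l x}"
  note iff = pos_hull_iff_positive_coords_subset[OF assms]
  have p_in: "p \<in> pos_hull ?S" using iff[of ?S] by simp
  then have "?S \<subseteq> E \<and> p \<in> pos_hull ?S \<and> (\<forall>T. T \<subset> ?S \<longrightarrow> p \<notin> pos_hull T)"
    using iff by (auto simp del: mem_Collect_eq)
  moreover have "S = ?S" if S: "S \<subseteq> E \<and> p \<in> pos_hull S \<and> (\<forall>T. T \<subset> S \<longrightarrow> p \<notin> pos_hull T)" for S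
  proof -
    have "?S \<subseteq> S" using S iff by blast
    then show ?thesis using S p_in by blast
  qed
  ultimately show ?thesis unfolding support_def by (rule the_equality)
qed

lemma strange_index_canonical_coords:
  assumes can: "canonical_coords l p" and "strange_index E p e"
  shows "e \<in> E" "0 < l e" "\<exists>x\<in>E. 0 < l x \<and> l x < l e"
proof -
  let ?S = "{x\<in>E. 0 < l x}"
  obtain l' c where e: "e \<in> ?S" and l': "p = (\<Sum>x\<in>?S. l' x *\<^sub>R x)"
    and c: "c > 0" "Min ((\<lambda>x. c * l' x) ` ?S) = 1" "c * l' e > 1"
    using assms(2) unfolding strange_index_def support_canonical_coords[OF can] by blast
  then show "e \<in> E" "0 < l e" by auto
  define l'' where "l'' z = (if z \<in> ?S then l' z else 0)" for z
  have "(\<Sum>z\<in>E. l'' z *\<^sub>R z) = (\<Sum>z\<in>E. l z *\<^sub>R z)"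
    using can l' sum_restrict_scaleR[of ?S l'] unfolding canonical_coords_def l''_def by simp
  note const = coords_diff_constant[OF this]
  obtain y where y: "y \<in> E" "l y = 0" using can unfolding canonical_coords_def by blast
  have l'_eq: "l' z = l z" if "z \<in> ?S" for z
    using const[of z y] that y by (simp add: l''_def)
  have "Min ((\<lambda>x. c * l' x) ` ?S) \<in> (\<lambda>x. c * l' x) ` ?S"
    using e finite_E by (intro Min_in) auto
  then obtain x where x: "x \<in> ?S" "c * l' x = 1" using c(2) by auto
  then have "c * l x < c * l e" using l'_eq[OF x(1)] l'_eq[OF e] c by simp
  then have "l x < l e" using c(1) by simp
  then show "\<exists>x\<in>E. 0 < l x \<and> l x < l e" using x(1) by blast
qed

text \<open>Two vertices u, v are needed because one of them may carry the negative coefficient of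
  a relation.\<close>

lemma conical_replace_vertex:
  assumes can: "canonical_coords l p" and "p \<notin> E"
    and x: "x \<in> E" "0 < l x" and uv: "u \<in> E" "v \<in> E" "u \<noteq> v" "l x < l u" "l x < l v"
  shows "conical_position (insert p (E - {x}))"
proof (rule conical_positionI)
  show "finite (insert p (E - {x}))" using finite_E by simp
  fix d t
  assume "t \<in> insert p (E - {x})" and rel: "(\<Sum>y\<in>insert p (E - {x}). d y *\<^sub>R y) = 0"
    and nonneg: "\<forall>y\<in>insert p (E - {x}) - {t}. 0 \<le> d y"
  have coords: "\<And>y. y \<in> {p} \<Longrightarrow> y = (\<Sum>z\<in>E. l z *\<^sub>R z)"
    using can unfolding canonical_coords_def by simp
  have R: "d p * l z + (if z = x then 0 else d z) = d p * l x" if "z \<in> E" for z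
    using relation_in_coords[of "{p}" "\<lambda>_. l" d "{x}", OF _ _ coords _ that x(1)] rel \<open>p \<notin> E\<close>
    by simp
  obtain w where w: "w \<in> E" "l w = 0" using can unfolding canonical_coords_def by blast
  have "0 \<le> d p"
  proof (cases "t = p")
    case True
    have "w \<noteq> x" using w x by auto
    with True have "0 \<le> d w" using nonneg w \<open>p \<notin> E\<close> by auto
    then have "0 \<le> d p * l x" using R[OF w(1)] w \<open>w \<noteq> x\<close> by simp
    then show ?thesis using x(2) by (simp add: zero_le_mult_iff)
  qed (use nonneg in auto)
  moreover have "d p \<le> 0"
  proof -
    obtain u' where u': "u' \<in> E" "u' \<noteq> t" "l x < l u'" using uv by metis
    then have "u' \<noteq> x" "0 \<le> d u'" using nonneg by auto
    then have "d p * (l u' - l x) \<le> 0" using R[OF u'(1)] by (simp add: right_diff_distrib)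
    then show ?thesis using u'(3) by (simp add: mult_le_0_iff)
  qed
  ultimately have "d p = 0" by simp
  show "\<forall>y\<in>insert p (E - {x}). d y = 0"
  proof
    fix y assume "y \<in> insert p (E - {x})"
    then consider "y = p" | "y \<in> E" "y \<noteq> x" by auto
    then show "d y = 0" using R[of y] \<open>d p = 0\<close> by cases auto
  qed
qed

lemma conical_replace_two_vertices:
  assumes canp: "canonical_coords l p" and canq: "canonical_coords m q"
    and "p \<notin> E" "q \<notin> E" "p \<noteq> q"
    and a: "a \<in> E" "0 < l a" "m a = 0" and b: "b \<in> E" "l b = 0" "0 < m b"
    and e: "e \<in> E" "l a < l e" "m e = 0" and k: "k \<in> E" "l a \<le> l k" "0 < m k"
  shows "conical_position (insert p (insert q (E - {a, b})))"
proof (rule conical_positionI)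
  let ?A = "insert p (insert q (E - {a, b}))"
  show "finite ?A" using finite_E by simp
  fix d t
  assume "t \<in> ?A" and rel: "(\<Sum>y\<in>?A. d y *\<^sub>R y) = 0" and nonneg: "\<forall>y\<in>?A - {t}. 0 \<le> d y"
  define c where "c y = (if y = p then l else m)" for y
  have coords: "\<And>y. y \<in> {p, q} \<Longrightarrow> y = (\<Sum>z\<in>E. c y z *\<^sub>R z)"
    using canp canq unfolding canonical_coords_def c_def by auto
  have R: "d p * l z + d q * m z + (if z \<in> {a, b} then 0 else d z) = d p * l a" if "z \<in> E" for z
    using relation_in_coords[of "{p, q}" c d "{a, b}", OF _ _ coords _ that a(1)] rel a(3)
      \<open>p \<notin> E\<close> \<open>q \<notin> E\<close> \<open>p \<noteq> q\<close>
    by (simp add: c_def insert_commute)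
  have distinct: "e \<noteq> a" "e \<noteq> b" "k \<noteq> a" "k \<noteq> b" "k \<noteq> e" using a b e k by auto
  have Rb: "d q * m b = d p * l a" using R[OF b(1)] b(2) by simp
  have "0 \<le> d p"
  proof (cases "t = p")
    case True
    then have "0 \<le> d q" using nonneg \<open>p \<noteq> q\<close> by auto
    then have "0 \<le> d p * l a" using Rb b(3) by (metis zero_le_mult_iff less_imp_le)
    then show ?thesis using a(2) by (simp add: zero_le_mult_iff)
  qed (use nonneg in auto)
  moreover have "0 \<le> d q"
  proof (cases "t = q")
    case True
    have "0 \<le> d q * m b" using \<open>0 \<le> d p\<close> a(2) Rb by simp
    then show ?thesis using b(3) by (simp add: zero_le_mult_iff)
  qed (use nonneg in auto)
  ultimately have "d p = 0 \<and> d q = 0"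
  proof (cases "t = e")
    case False
    then have "0 \<le> d e" using nonneg e(1) distinct \<open>p \<notin> E\<close> \<open>q \<notin> E\<close> by auto
    then have "d p * (l e - l a) \<le> 0" using R[OF e(1)] e distinct by (simp add: right_diff_distrib)
    then have "d p = 0" using \<open>0 \<le> d p\<close> e(2) by (simp add: mult_le_0_iff)
    then show ?thesis using Rb b(3) by simp
  next
    case True
    then have "0 \<le> d k" using nonneg k(1) distinct \<open>p \<notin> E\<close> \<open>q \<notin> E\<close> by auto
    moreover have "d p * (l a - l k) \<le> 0" using \<open>0 \<le> d p\<close> k(2) by (simp add: mult_nonneg_nonpos)
    ultimately have "d q * m k \<le> 0" using R[OF k(1)] distinct by (simp add: right_diff_distrib)
    then have "d q = 0" using \<open>0 \<le> d q\<close> k(3) by (simp add: mult_le_0_iff)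
    then show ?thesis using Rb a(2) by simp
  qed
  show "\<forall>y\<in>?A. d y = 0"
  proof
    fix y assume "y \<in> ?A"
    then consider "y = p" | "y = q" | "y \<in> E" "y \<notin> {a, b}" by auto
    then show "d y = 0" using R[of y] \<open>d p = 0 \<and> d q = 0\<close> by cases auto
  qed
qed

end

context full_centred_simplex
begin

lemma canonical_coords_exist: "\<exists>l. canonical_coords l p"
proof -
  have "aff_dim E = DIM('a)"
    using aff_dim_affine_independent[OF independent_E] card_E by simp
  then have "affine hull E = UNIV" by (simp add: aff_dim_eq_full)
  then have "p \<in> affine hull E" by simp
  then obtain u where u: "sum u E = 1" "(\<Sum>x\<in>E. u x *\<^sub>R x) = p"
    using affine_hull_finite[OF finite_E] by auto
  define m where "m = Min (u ` E)"
  have "E \<noteq> {}" using u(1) by auto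
  then have "m \<in> u ` E" unfolding m_def using finite_E by (intro Min_in) auto
  then obtain y where y: "y \<in> E" "u y = m" by auto
  have "\<forall>x\<in>E. m \<le> u x" using finite_E m_def by auto
  moreover have "(\<Sum>x\<in>E. (u x - m) *\<^sub>R x) = p"
    using u sum_E by (simp add: scaleR_diff_left sum_subtractf flip: scaleR_sum_right)
  ultimately have "canonical_coords (\<lambda>x. u x - m) p"
    unfolding canonical_coords_def using y by auto
  then show ?thesis by blast
qed

lemma support_vertex:
  assumes "v \<in> E"
  shows "support E v = {v}"
proof -
  have "card (E - {v}) > 0"
    using card_E finite_E assms by (simp add: card_Diff_singleton)
  then have "E - {v} \<noteq> {}" by (auto simp: card_gt_0_iff)
  then obtain w where w: "w \<in> E" "w \<noteq> v" by blast
  have "(\<Sum>z\<in>E. (if z = v then 1 else 0) *\<^sub>R z) = (\<Sum>z\<in>E. if z = v then z else 0)"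
    by (rule sum.cong) auto
  also have "\<dots> = v" using finite_E assms by simp
  finally have "canonical_coords (\<lambda>z. if z = v then 1 else 0) v"
    unfolding canonical_coords_def using w by auto
  from support_canonical_coords[OF this] show ?thesis using assms by auto
qed

lemma strange_index_eq_common_vertex:
  assumes X: "E \<subseteq> X" "p \<in> X" "q \<in> X"
    and good: "\<forall>A\<subseteq>X. card A = DIM('a) + 1 \<longrightarrow> good_position A"
    and inter: "support E p \<inter> support E q = {k}"
    and card_p: "3 \<le> card (support E p)" and card_q: "2 \<le> card (support E q)"
    and strange: "strange_index E p e"
  shows "e = k"
proof (rule ccontr)
  assume "e \<noteq> k"
  obtain l m where canp: "canonical_coords l p" and canq: "canonical_coords m q"
    using canonical_coords_exist by blast
  note Sp = support_canonical_coords[OF canp] and Sq = support_canonical_coords[OF canq]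
  have "p \<notin> E" "q \<notin> E" using support_vertex card_p card_q by force+
  have "p \<noteq> q" using inter card_p by auto
  obtain x where e: "e \<in> E" "0 < l e" and x: "x \<in> E" "0 < l x" "l x < l e"
    using strange_index_canonical_coords[OF canp strange] by blast
  have not_conical: "\<not> conical_position A" if "A \<subseteq> X" "card A = card E" for A
    using good that card_E unfolding good_position_def by auto
  have k: "k \<in> E" "0 < l k" "0 < m k" using inter Sp Sq by auto
  have only_p: "m z = 0" if "z \<in> support E p" "z \<noteq> k" for z
    using inter that canq Sp Sq unfolding canonical_coords_def by force
  have only_q: "l z = 0" if "z \<in> support E q" "z \<noteq> k" for z
    using inter that canp Sp Sq unfolding canonical_coords_def by force
  have "card {k, e} \<le> 2" by (simp add: card_insert_if)
  then have "\<not> support E p \<subseteq> {k, e}" using card_p card_mono[of "{k, e}" "support E p"] by auto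
  then obtain a where a: "a \<in> support E p" "a \<noteq> k" "a \<noteq> e" by blast
  have "\<not> support E q \<subseteq> {k}" using card_q card_mono[of "{k}" "support E q"] by auto
  then obtain b where b: "b \<in> support E q" "b \<noteq> k" by blast
  have "a \<in> E" "0 < l a" using a(1) Sp by auto
  have "b \<in> E" "0 < m b" using b(1) Sq by auto
  have "m a = 0" "l b = 0" using only_p[OF a(1,2)] only_q[OF b] .
  have "e \<in> support E p" using e Sp by simp
  then have "m e = 0" using only_p \<open>e \<noteq> k\<close> by blast
  have card_replace: "card (insert p (E - {y})) = card E" if "y \<in> E" for y
    using that \<open>p \<notin> E\<close> finite_E card_E by simp
  consider "l e \<le> l a" | "l k < l a" "l a < l e" | "l a \<le> l k" "l a < l e" by linarith
  then show False
  proof cases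
    case 1
    have "conical_position (insert p (E - {x}))"
      by (rule conical_replace_vertex[OF canp \<open>p \<notin> E\<close> x(1,2) e(1) \<open>a \<in> E\<close>])
        (use 1 x a(3) in auto)
    moreover have "insert p (E - {x}) \<subseteq> X" using X by auto
    ultimately show ?thesis using not_conical card_replace[OF x(1)] by blast
  next
    case 2
    have "conical_position (insert p (E - {k}))"
      by (rule conical_replace_vertex[OF canp \<open>p \<notin> E\<close> k(1,2) e(1) \<open>a \<in> E\<close>])
        (use 2 a(3) in auto)
    moreover have "insert p (E - {k}) \<subseteq> X" using X by auto
    ultimately show ?thesis using not_conical card_replace[OF k(1)] by blast
  next
    case 3
    have "conical_position (insert p (insert q (E - {a, b})))"
      using conical_replace_two_vertices[OF canp canq \<open>p \<notin> E\<close> \<open>q \<notin> E\<close> \<open>p \<noteq> q\<close>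
          \<open>a \<in> E\<close> \<open>0 < l a\<close> \<open>m a = 0\<close> \<open>b \<in> E\<close> \<open>l b = 0\<close> \<open>0 < m b\<close>
          e(1) 3(2) \<open>m e = 0\<close> k(1) 3(1) k(3)] .
    moreover have "card (insert p (insert q (E - {a, b}))) = card E"
    proof -
      have "a \<noteq> b" using \<open>0 < l a\<close> \<open>l b = 0\<close> by auto
      then have "card (E - {a, b}) = card E - 2"
        using \<open>a \<in> E\<close> \<open>b \<in> E\<close> finite_E by (simp add: card_Diff_subset)
      then show ?thesis using \<open>p \<notin> E\<close> \<open>q \<notin> E\<close> \<open>p \<noteq> q\<close> finite_E card_E by simp
    qed
    moreover have "insert p (insert q (E - {a, b})) \<subseteq> X" using X by auto
    ultimately show ?thesis using not_conical by blast
  qed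
qed

end

theorem proposition6p6:
  fixes E X :: "'a::euclidean_space set" and p q e\<^sub>k :: 'a
  assumes dim: "DIM('a) \<ge> 3"
    and E_fin: "finite E" and E_card: "card E = DIM('a) + 1"
    and E_simplex: "\<not> affine_dependent E" and E_sum: "\<Sum>E = 0"
    and X_fin: "finite X" and X_nz: "0 \<notin> X" and EX: "E \<subseteq> X"
    and X_nomult: "\<forall>x\<in>X. \<forall>y\<in>X. x \<noteq> y \<longrightarrow> \<not> (\<exists>c>0. y = c *\<^sub>R x)"
    and X_good: "\<forall>A\<subseteq>X. card A = DIM('a) + 1 \<longrightarrow> good_position A"
    and pX: "p \<in> X" and qX: "q \<in> X"
    and union: "support E p \<union> support E q = E"
    and inter: "support E p \<inter> support E q = {e\<^sub>k}"
  shows "(card (support E p) \<ge> 3 \<and> card (support E q) \<ge> 3 \<longrightarrow>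
            (\<forall>e. strange_index E p e \<longrightarrow> e = e\<^sub>k) \<and> (\<forall>e. strange_index E q e \<longrightarrow> e = e\<^sub>k))
       \<and> (card (support E p) = 2 \<longrightarrow> (\<forall>e. strange_index E q e \<longrightarrow> e = e\<^sub>k))"
proof -
  interpret full_centred_simplex E
    using E_fin E_simplex E_sum E_card by unfold_locales
  note strange_p = strange_index_eq_common_vertex[OF EX pX qX X_good inter]
  have "support E q \<inter> support E p = {e\<^sub>k}" using inter by blast
  note strange_q = strange_index_eq_common_vertex[OF EX qX pX X_good this]
  have "finite (support E p)" "finite (support E q)" using union E_fin by (metis finite_Un)+
  then have "card (support E p) + card (support E q) = card E + 1"
    using card_Un_Int union inter by fastforce
  then have "card (support E p) = 2 \<Longrightarrow> 3 \<le> card (support E q)" using E_card dim by simp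
  then show ?thesis using strange_p strange_q by auto
qed

end
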